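(* Assume the setting described in the context. Let $k\in\mathbb{Z}$, let $R\in\mathcal{D}_k$ be a good cube, and let $i\ge r+1$ be an integer with $R^{(i)}\subset Q^*$. Then for every $(x,t)\in W_R$ and every $f\in L^1_{loc}(\mu)$, $$\left(\int_{\mathbb{R}^n}\big|\theta_t(\mathbf{1}_{R^{(i)}\setminus R^{(i-1)}}\Delta_{R^{(i)}}f)(y)\big|^2\Big(\frac{t}{t+|x-y|}\Big)^{m\lambda}\frac{d\mu(y)}{t^m}\right)^{1/2}\le C\,2^{-\frac{\alpha}{2}i}\,2^{-(k+i)m}\,\|\Delta_{R^{(i)}}f\|_{L^1(\mu)},$$ where $C$ is independent of $R,k,i,x,t,f$.
   Context: Measure and kernel: $n\ge1$, $m>0$; $\mu$ is a Borel measure on $\mathbb{R}^n$ with $\mu(B(x,r))\le C r^m$ for all $x$, $r>0$; distances, balls and cubes use the $\ell^\infty$ metric $|x-y|=\max_i|x_i-y_i|$. Fix $\lambda>2$ and $0<\alpha\le m(\lambda-2)/2$. The kernel $s_t:\mathbb{R}^n\times\mathbb{R}^n\to\mathbb{C}$ ($t>0$) satisfies $|s_t(x,y)|\le C t^\alpha/(t+|x-y|)^{m+\alpha}$ and $|s_t(x,y)-s_t(x,y')|\le C|y-y'|^\alpha/(t+|x-y|)^{m+\alpha}$ whenever $|y-y'|<t/2$; $\theta_t f(y)=\int s_t(y,z)f(z)\,d\mu(z)$. Dyadic grid: for a fixed sequence $\beta=(\beta_j)_{j\in\mathbb{Z}}$, $\beta_j\in\{0,1\}^n$, let $\mathcal{D}=\bigcup_{k\in\mathbb{Z}}\mathcal{D}_k$,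 $\mathcal{D}_k=\{2^k([0,1)^n+v)+\sum_{j<k}2^j\beta_j: v\in\mathbb{Z}^n\}$ (cubes of side $2^k$). For $Q\in\mathcal{D}$, $\ell(Q)$ is its side length, $\operatorname{ch}(Q)$ its $2^n$ dyadic children, and $Q^{(k)}$ the unique cube of $\mathcal{D}$ with $\ell(Q^{(k)})=2^k\ell(Q)$ and $Q\subset Q^{(k)}$. Fix an integer $r\ge1$ and $\gamma\in(0,1/2)$ with $\gamma\le \frac{\alpha}{2(m+\alpha)}$ and $\frac{m\gamma}{1-\gamma}\le\frac{\alpha}{4}$. A cube $I\in\mathcal{D}$ is bad if there is $J\in\mathcal{D}$ with $\ell(J)\ge 2^r\ell(I)$ and $\operatorname{dist}(I,\partial J)\le\ell(I)^\gamma\ell(J)^{1-\gamma}$; otherwise it is good. $W_R=R\times(\ell(R)/2,\ell(R)]$. Twisted martingale differences: let $1<p\le2$, $p'=p/(p-1)$. For each cube $Q$ let $b_Q$ satisfy $\operatorname{supp}b_Q\subset Q$, $\langle b_Q\rangle_Q=1$ and $\|b_Q\|^p_{L^p(\mu)}\le A\mu(Q)$, where $\langle h\rangle_Q=\mu(Q)^{-1}\int_Q h\,d\mu$ and $A$ is a fixed constant. Fix $s\in\mathbb{Z}$ and $Q^*\in\mathcal{D}$ with $\ell(Q^* )=2^s$. Stopping cubes: $\mathcal{F}^0=\{Q^*\}$; given $\mathcal{F}^j$, $\mathcal{F}^{j+1}$ consists, for each $F\in\mathcal{F}^j$, of the maximal cubes $Q\in\mathcal{D}$, $Q\subsetneq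 F$, with $|\langle b_F\rangle_Q|<1/2$ or $\langle|b_F|^p\rangle_Q>2^{p'+1}A^{p'}$; $\mathcal{F}_{Q^*}=\bigcup_j\mathcal{F}^j$. For $Q\in\mathcal{D}$, $Q\subset Q^*$, $Q^a$ is the minimal $F\in\mathcal{F}_{Q^*}$ with $Q\subset F$. For $f\in L^1_{loc}(\mu)$ and $Q\subset Q^*$, $$\Delta_Q f=\sum_{Q'\in\operatorname{ch}(Q)}\Big[\frac{\langle f\rangle_{Q'}}{\langle b_{(Q')^a}\rangle_{Q'}}b_{(Q')^a}-\frac{\langle f\rangle_Q}{\langle b_{Q^a}\rangle_Q}b_{Q^a}\Big]\mathbf{1}_{Q'},$$ except that for $Q=Q^*$ one adds the term $\langle f\rangle_{Q^*}b_{Q^*}$. *)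

theory Defs
  imports "HOL-Analysis.Analysis"
begin

definition linf_dist :: "real ^ 'n \<Rightarrow> real ^ 'n \<Rightarrow> real" where
  "linf_dist x y = Max (range (\<lambda>i. \<bar>x $ i - y $ i\<bar>))"

definition linf_ball :: "real ^ 'n \<Rightarrow> real \<Rightarrow> (real ^ 'n) set" where
  "linf_ball x r = {y. linf_dist x y < r}"

definition linf_setdist :: "(real ^ 'n) set \<Rightarrow> (real ^ 'n) set \<Rightarrow> real" where
  "linf_setdist A B = Inf {linf_dist x y | x y. x \<in> A \<and> y \<in> B}"

text \<open>The shift \<open>\<Sum>_{j<k} 2^j \<beta>_j\<close>.\<close>
definition dshift :: "(int \<Rightarrow> real ^ 'n) \<Rightarrow> int \<Rightarrow> real ^ 'n" where
  "dshift beta k = (\<Sum>j. ((2::real) powr (real_of_int k - 1 - real j)) *\<^sub>R beta (k - 1 - int j))"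

text \<open>The cube \<open>2^k([0,1)^n + v) + \<Sum>_{j<k} 2^j \<beta>_j\<close>.\<close>
definition dcube :: "(int \<Rightarrow> real ^ 'n) \<Rightarrow> int \<Rightarrow> int ^ 'n \<Rightarrow> (real ^ 'n) set" where
  "dcube beta k v = {x. \<forall>i. (2::real) powr k * of_int (v $ i) + dshift beta k $ i \<le> x $ i
                          \<and> x $ i < (2::real) powr k * (of_int (v $ i) + 1) + dshift beta k $ i}"

definition Dk :: "(int \<Rightarrow> real ^ 'n) \<Rightarrow> int \<Rightarrow> (real ^ 'n) set set" where
  "Dk beta k = range (dcube beta k)"

definition dyadic :: "(int \<Rightarrow> real ^ 'n) \<Rightarrow> (real ^ 'n) set set" where
  "dyadic beta = (\<Union>k. Dk beta k)"

definition dlevel :: "(int \<Rightarrow> real ^ 'n) \<Rightarrow> (real ^ 'n) set \<Rightarrow> int" where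
  "dlevel beta Q = (THE k. Q \<in> Dk beta k)"

definition side :: "(int \<Rightarrow> real ^ 'n) \<Rightarrow> (real ^ 'n) set \<Rightarrow> real" where
  "side beta Q = (2::real) powr (dlevel beta Q)"

definition children :: "(int \<Rightarrow> real ^ 'n) \<Rightarrow> (real ^ 'n) set \<Rightarrow> (real ^ 'n) set set" where
  "children beta Q = {Q' \<in> Dk beta (dlevel beta Q - 1). Q' \<subseteq> Q}"

definition anc :: "(int \<Rightarrow> real ^ 'n) \<Rightarrow> nat \<Rightarrow> (real ^ 'n) set \<Rightarrow> (real ^ 'n) set" where
  "anc beta j Q = (THE P. P \<in> Dk beta (dlevel beta Q + int j) \<and> Q \<subseteq> P)"

definition bad :: "(int \<Rightarrow> real ^ 'n) \<Rightarrow> nat \<Rightarrow> real \<Rightarrow> (real ^ 'n) set \<Rightarrow> bool" where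
  "bad beta r \<gamma> I = (\<exists>J \<in> dyadic beta. side beta J \<ge> 2 ^ r * side beta I \<and>
      linf_setdist I (frontier J) \<le> side beta I powr \<gamma> * side beta J powr (1 - \<gamma>))"

definition good :: "(int \<Rightarrow> real ^ 'n) \<Rightarrow> nat \<Rightarrow> real \<Rightarrow> (real ^ 'n) set \<Rightarrow> bool" where
  "good beta r \<gamma> I = (I \<in> dyadic beta \<and> \<not> bad beta r \<gamma> I)"

definition avg :: "'a measure \<Rightarrow> 'a set \<Rightarrow> ('a \<Rightarrow> 'b::{banach, second_countable_topology}) \<Rightarrow> 'b" where
  "avg mu Q h = inverse (measure mu Q) *\<^sub>R (LINT x:Q|mu. h x)"

definition loc_integrable :: "(real ^ 'n) measure \<Rightarrow> (real ^ 'n \<Rightarrow> complex) \<Rightarrow> bool" where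
  "loc_integrable mu f \<longleftrightarrow> f \<in> borel_measurable mu \<and> (\<forall>K. compact K \<longrightarrow> set_integrable mu K f)"

definition theta :: "(real ^ 'n) measure \<Rightarrow> (real \<Rightarrow> real ^ 'n \<Rightarrow> real ^ 'n \<Rightarrow> complex)
                      \<Rightarrow> real \<Rightarrow> (real ^ 'n \<Rightarrow> complex) \<Rightarrow> real ^ 'n \<Rightarrow> complex" where
  "theta mu s t g y = (LINT z|mu. s t y z * g z)"

definition stop_cond :: "'a measure \<Rightarrow> real \<Rightarrow> real \<Rightarrow> ('a \<Rightarrow> complex) \<Rightarrow> 'a set \<Rightarrow> bool" where
  "stop_cond mu A p bF Q \<longleftrightarrow>
     norm (avg mu Q bF) < 1/2 \<or>
     avg mu Q (\<lambda>x. norm (bF x) powr p) > 2 powr (p / (p - 1) + 1) * A powr (p / (p - 1))"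

primrec stop_gen :: "(int \<Rightarrow> real ^ 'n) \<Rightarrow> (real ^ 'n) measure \<Rightarrow> ((real ^ 'n) set \<Rightarrow> real ^ 'n \<Rightarrow> complex)
     \<Rightarrow> real \<Rightarrow> real \<Rightarrow> (real ^ 'n) set \<Rightarrow> nat \<Rightarrow> (real ^ 'n) set set" where
  "stop_gen beta mu b A p Qs 0 = {Qs}"
| "stop_gen beta mu b A p Qs (Suc j) =
     {Q. \<exists>F \<in> stop_gen beta mu b A p Qs j.
           Q \<in> dyadic beta \<and> Q \<subset> F \<and> stop_cond mu A p (b F) Q \<and>
           \<not> (\<exists>Q' \<in> dyadic beta. Q \<subset> Q' \<and> Q' \<subset> F \<and> stop_cond mu A p (b F) Q')}"

definition stopping where
  "stopping beta mu b A p Qs = (\<Union>j. stop_gen beta mu b A p Qs j)"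

definition stop_parent where
  "stop_parent beta mu b A p Qs Q =
     (THE F. F \<in> stopping beta mu b A p Qs \<and> Q \<subseteq> F \<and>
        (\<forall>F' \<in> stopping beta mu b A p Qs. Q \<subseteq> F' \<longrightarrow> F \<subseteq> F'))"

definition tDelta :: "(int \<Rightarrow> real ^ 'n) \<Rightarrow> (real ^ 'n) measure \<Rightarrow> ((real ^ 'n) set \<Rightarrow> real ^ 'n \<Rightarrow> complex)
     \<Rightarrow> real \<Rightarrow> real \<Rightarrow> (real ^ 'n) set \<Rightarrow> (real ^ 'n) set \<Rightarrow> (real ^ 'n \<Rightarrow> complex) \<Rightarrow> real ^ 'n \<Rightarrow> complex" where
  "tDelta beta mu b A p Qs Q f x =
     (\<Sum>Q' \<in> children beta Q.
        indicator Q' x *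
          (avg mu Q' f / avg mu Q' (b (stop_parent beta mu b A p Qs Q')) * b (stop_parent beta mu b A p Qs Q') x
           - avg mu Q f / avg mu Q (b (stop_parent beta mu b A p Qs Q)) * b (stop_parent beta mu b A p Qs Q) x))
     + (if Q = Qs then avg mu Qs f * b Qs x else 0)"

end

theory Submission
  imports Defs
begin

text \<open>
  Put \<open>g = indicator (R^(i) - R^(i-1)) * \<Delta>_R^(i) f\<close>. Since \<open>R\<close> is good and \<open>R \<subseteq> R^(i-1)\<close>, every
  point \<open>z\<close> of the support of \<open>g\<close> is at distance at least
  \<open>d = \<ell>(R) powr \<gamma> * \<ell>(R^(i-1)) powr (1 - \<gamma>)\<close> from every \<open>x \<in> R\<close>. Cauchy--Schwarz in \<open>z\<close> and
  Tonelli bound the left-hand side by \<open>\<parallel>g\<parallel>\<^sub>1\<^sup>2\<close> times the largest weighted \<open>L\<^sup>2\<close> norm of a column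
  \<open>y \<mapsto> s\<^sub>t(y, z)\<close> with \<open>|x - z| \<ge> d\<close>. For such \<open>z\<close> every \<open>y\<close> satisfies \<open>|y - z| \<ge> d/2\<close>, where
  the size condition makes the kernel small, or \<open>|x - y| \<ge> d/2\<close>, where the weight
  \<open>(t / (t + |x - y|)) powr (m * \<lambda>)\<close> is small; what remains is a tail integral
  \<open>\<integral> (t / (t + |c - y|)) powr \<beta> d\<mu>(y) \<lesssim> t powr m\<close> (for \<open>\<beta> > m\<close>), which follows from the
  growth condition on dyadic dilates of a ball. Inserting \<open>t \<approx> \<ell>(R) = 2 powr k\<close> and
  \<open>d = 2 powr (k + (i - 1) * (1 - \<gamma>))\<close> gives the decay \<open>2 powr (- \<alpha> * i) * 2 powr (- 2 * (k + i) * m)\<close>.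
\<close>

section \<open>The \<open>\<ell>\<^sup>\<infinity>\<close> distance\<close>

lemma linf_dist_ge_component: "\<bar>x $ i - y $ i\<bar> \<le> linf_dist x y"
  unfolding linf_dist_def by (rule Max_ge) auto

lemma linf_dist_le: "(\<And>i. \<bar>x $ i - y $ i\<bar> \<le> c) \<Longrightarrow> linf_dist x y \<le> c"
  unfolding linf_dist_def by (subst Max_le_iff) auto

lemma linf_dist_nonneg: "0 \<le> linf_dist x y"
  using linf_dist_ge_component[of x _ y] abs_ge_zero order_trans by blast

lemma linf_dist_commute: "linf_dist x y = linf_dist y x"
  unfolding linf_dist_def by (simp add: abs_minus_commute)

lemma linf_dist_triangle: "linf_dist x z \<le> linf_dist x y + linf_dist y z"
proof (rule linf_dist_le)
  fix i
  have "\<bar>x $ i - z $ i\<bar> \<le> \<bar>x $ i - y $ i\<bar> + \<bar>y $ i - z $ i\<bar>" by simp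
  also have "\<dots> \<le> linf_dist x y + linf_dist y z"
    using linf_dist_ge_component by (intro add_mono) auto
  finally show "\<bar>x $ i - z $ i\<bar> \<le> linf_dist x y + linf_dist y z" .
qed

lemma linf_dist_le_norm: "linf_dist x y \<le> norm (x - y)"
  by (rule linf_dist_le) (metis component_le_norm_cart vector_minus_component)

lemma lipschitz_on_linf_dist: "lipschitz_on 1 UNIV (linf_dist x)"
proof (rule lipschitz_onI)
  fix y y'
  have "linf_dist x y \<le> linf_dist x y' + linf_dist y' y"
    and "linf_dist x y' \<le> linf_dist x y + linf_dist y y'"
    by (rule linf_dist_triangle)+
  moreover have "linf_dist y' y \<le> norm (y - y')" "linf_dist y y' \<le> norm (y - y')"
    using linf_dist_le_norm[of y' y] linf_dist_le_norm[of y y'] by (simp_all add: norm_minus_commute)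
  ultimately show "dist (linf_dist x y) (linf_dist x y') \<le> 1 * dist y y'"
    by (simp add: dist_real_def dist_norm)
qed (simp)

lemma borel_measurable_linf_dist[measurable]: "linf_dist x \<in> borel_measurable borel"
  using lipschitz_on_continuous_on[OF lipschitz_on_linf_dist] by (rule borel_measurable_continuous_onI)

lemma linf_ball_borel[measurable]: "linf_ball x r \<in> sets borel"
  unfolding linf_ball_def by measurable

lemma linf_setdist_le:
  assumes "x \<in> A" "w \<in> B"
  shows "linf_setdist A B \<le> linf_dist x w"
  unfolding linf_setdist_def
  by (rule cInf_lower) (use assms in \<open>auto intro: bdd_belowI[of _ 0] simp: linf_dist_nonneg\<close>)

text \<open>The segment from \<open>x \<in> J\<close> to \<open>z \<notin> J\<close> meets \<open>\<partial>J\<close> at a point no farther from \<open>x\<close> than \<open>z\<close>.\<close>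

lemma linf_setdist_frontier_le:
  assumes "x \<in> R" "x \<in> J" "z \<notin> J"
  shows "linf_setdist R (frontier J) \<le> linf_dist x z"
proof -
  have "closed_segment x z \<inter> frontier J \<noteq> {}"
    by (rule connected_Int_frontier) (use assms in auto)
  then obtain w where w: "w \<in> closed_segment x z" "w \<in> frontier J" by blast
  then obtain u where u: "0 \<le> u" "u \<le> 1" "w = (1 - u) *\<^sub>R x + u *\<^sub>R z"
    unfolding closed_segment_def by blast
  have "linf_dist x w \<le> linf_dist x z"
  proof (rule linf_dist_le)
    fix i
    have "w $ i = (1 - u) * x $ i + u * z $ i" using u(3) by simp
    then have "x $ i - w $ i = u * (x $ i - z $ i)" by (simp add: algebra_simps)
    then have "\<bar>x $ i - w $ i\<bar> = u * \<bar>x $ i - z $ i\<bar>" using u(1) by (simp add: abs_mult)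
    also have "\<dots> \<le> linf_dist x z"
      using u linf_dist_ge_component[of x i z] by (meson abs_ge_zero mult_left_le_one_le order_trans)
    finally show "\<bar>x $ i - w $ i\<bar> \<le> linf_dist x z" .
  qed
  then show ?thesis using linf_setdist_le[OF assms(1) w(2)] by linarith
qed


section \<open>The dyadic grid\<close>

definition dindex :: "(int \<Rightarrow> real ^ 'n) \<Rightarrow> int \<Rightarrow> real ^ 'n \<Rightarrow> int ^ 'n" where
  "dindex beta k x = (\<chi> i. \<lfloor>(x $ i - dshift beta k $ i) / 2 powr k\<rfloor>)"

definition dcorner :: "(int \<Rightarrow> real ^ 'n) \<Rightarrow> int \<Rightarrow> int ^ 'n \<Rightarrow> real ^ 'n" where
  "dcorner beta k v = (\<chi> i. 2 powr k * of_int (v $ i) + dshift beta k $ i)"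

lemma mem_dcube_iff: "x \<in> dcube beta k v \<longleftrightarrow> dindex beta k x = v"
proof -
  have "(2 powr k * of_int (v $ i) + dshift beta k $ i \<le> x $ i \<and>
         x $ i < 2 powr k * (of_int (v $ i) + 1) + dshift beta k $ i) \<longleftrightarrow>
        \<lfloor>(x $ i - dshift beta k $ i) / 2 powr k\<rfloor> = v $ i" for i
    by (simp add: floor_eq_iff pos_le_divide_eq pos_divide_less_eq algebra_simps)
  then show ?thesis
    unfolding dcube_def dindex_def by (auto simp: vec_eq_iff)
qed

lemma dindex_dcorner: "dindex beta k (dcorner beta k v) = v"
  by (simp add: dindex_def dcorner_def vec_eq_iff)

lemma dcorner_mem_dcube: "dcorner beta k v \<in> dcube beta k v"
  by (simp add: mem_dcube_iff dindex_dcorner)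

lemma Dk_eq_dcube_dindex:
  assumes "Q \<in> Dk beta k" "x \<in> Q"
  shows "Q = dcube beta k (dindex beta k x)"
  using assms by (auto simp: Dk_def mem_dcube_iff)

lemma Dk_nonempty: "Q \<in> Dk beta k \<Longrightarrow> Q \<noteq> {}"
  using dcorner_mem_dcube by (fastforce simp: Dk_def)

lemma Dk_dyadic: "Q \<in> Dk beta k \<Longrightarrow> Q \<in> dyadic beta"
  by (auto simp: dyadic_def)

lemma Dk_borel: "Q \<in> Dk beta k \<Longrightarrow> Q \<in> sets borel"
  unfolding Dk_def dcube_def by auto

locale dyadic_grid =
  fixes beta :: "int \<Rightarrow> real ^ 'n"
  assumes beta01: "\<And>j i. beta j $ i \<in> {0, 1}"
begin

lemma summable_dshift:
  "summable (\<lambda>j. (2 powr (real_of_int k - 1 - real j)) *\<^sub>R beta (k - 1 - int j))"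
proof (rule summable_comparison_test)
  show "summable (\<lambda>j. (2 powr (real_of_int k - 1) * real CARD('n)) * (1/2::real) ^ j)"
    by (intro summable_mult summable_geometric) simp
  have norm_beta: "norm (beta l) \<le> real CARD('n)" for l
  proof -
    have "norm (beta l) \<le> (\<Sum>i\<in>UNIV. \<bar>beta l $ i\<bar>)" by (rule norm_le_l1_cart)
    also have "\<dots> \<le> (\<Sum>i\<in>(UNIV::'n set). 1)"
    proof (intro sum_mono)
      show "\<bar>beta l $ i\<bar> \<le> 1" for i using beta01[of l i] by auto
    qed
    finally show ?thesis by simp
  qed
  show "\<exists>N. \<forall>j\<ge>N. norm (2 powr (real_of_int k - 1 - real j) *\<^sub>R beta (k - 1 - int j))
      \<le> 2 powr (real_of_int k - 1) * real CARD('n) * (1 / 2) ^ j"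
  proof (intro exI allI impI)
    fix j :: nat
    have "2 powr (real_of_int k - 1 - real j) = 2 powr (real_of_int k - 1) * (1/2) ^ j"
      by (simp add: powr_diff powr_realpow divide_simps)
    then show "norm (2 powr (real_of_int k - 1 - real j) *\<^sub>R beta (k - 1 - int j))
        \<le> 2 powr (real_of_int k - 1) * real CARD('n) * (1 / 2) ^ j"
      using norm_beta by (simp add: mult_left_mono)
  qed
qed

lemma dshift_plus_one: "dshift beta (k + 1) = dshift beta k + 2 powr real_of_int k *\<^sub>R beta k"
proof -
  let ?f = "\<lambda>j. (2 powr (real_of_int (k + 1) - 1 - real j)) *\<^sub>R beta (k + 1 - 1 - int j)"
  have "(\<Sum>j. ?f (Suc j)) = suminf ?f - ?f 0"
    using summable_dshift[of "k + 1"] by (intro suminf_split_head) simp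
  moreover have "(\<lambda>j. ?f (Suc j)) = (\<lambda>j. (2 powr (real_of_int k - 1 - real j)) *\<^sub>R beta (k - 1 - int j))"
    by (auto simp: algebra_simps)
  ultimately show ?thesis
    unfolding dshift_def by simp
qed

lemma dindex_plus_one: "dindex beta (k + 1) x $ i = (dindex beta k x $ i - \<lfloor>beta k $ i\<rfloor>) div 2"
proof -
  have bi: "beta k $ i = of_int \<lfloor>beta k $ i\<rfloor>" using beta01[of k i] by auto
  have "(x $ i - dshift beta (k + 1) $ i) / 2 powr real_of_int (k + 1)
        = ((x $ i - dshift beta k $ i) / 2 powr real_of_int k - of_int \<lfloor>beta k $ i\<rfloor>) / real_of_int 2"
    unfolding dshift_plus_one using bi by (simp add: powr_add divide_simps algebra_simps)
  then have "dindex beta (k + 1) x $ i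
      = \<lfloor>((x $ i - dshift beta k $ i) / 2 powr real_of_int k - of_int \<lfloor>beta k $ i\<rfloor>) / real_of_int 2\<rfloor>"
    by (simp only: dindex_def vec_lambda_beta)
  also have "\<dots> = \<lfloor>(x $ i - dshift beta k $ i) / 2 powr real_of_int k - of_int \<lfloor>beta k $ i\<rfloor>\<rfloor> div 2"
    by (rule floor_divide_real_eq_div) simp
  finally show ?thesis unfolding dindex_def by simp
qed

lemma dindex_eq_mono:
  assumes "dindex beta k x = dindex beta k y" "k \<le> k'"
  shows "dindex beta k' x = dindex beta k' y"
  using assms(2)
proof (induction k' rule: int_ge_induct)
  case base show ?case by (fact assms(1))
next
  case (step l)
  then show ?case by (simp add: vec_eq_iff dindex_plus_one)
qed

lemma dcube_dindex_mono:
  "k \<le> k' \<Longrightarrow> dcube beta k (dindex beta k x) \<subseteq> dcube beta k' (dindex beta k' x)"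
  by (auto simp: mem_dcube_iff intro: dindex_eq_mono)

text \<open>A cube of \<open>\<D>\<^sub>k\<close> cannot be a cube of a coarser level: flipping the parity of
  each index coordinate (relative to the shift bit) gives a sibling with the same parent,
  which the coarser cube would have to contain as well.\<close>

lemma dcube_not_coarser:
  assumes eq: "dcube beta k v = dcube beta k' v'" and lt: "k < k'"
  shows False
proof -
  define flip where "flip = (\<lambda>n::int. if even n then n + 1 else n - 1)"
  have flip_div2: "flip n div 2 = n div 2" for n
  proof (cases "even n")
    case True
    then obtain q where "n = 2 * q" by (rule evenE)
    then show ?thesis using True by (simp add: flip_def)
  next
    case False
    then obtain q where "n = 2 * q + 1" by (rule oddE)
    then show ?thesis using False by (simp add: flip_def)
  qed
  have flip_ne: "flip n \<noteq> n" for n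
    by (simp add: flip_def)
  define w where "w = (\<chi> i. \<lfloor>beta k $ i\<rfloor> + flip (v $ i - \<lfloor>beta k $ i\<rfloor>))"
  define x where "x = dcorner beta k v"
  define y where "y = dcorner beta k w"
  have "dindex beta (k + 1) y $ i = dindex beta (k + 1) x $ i" for i
    using flip_div2[of "v $ i - \<lfloor>beta k $ i\<rfloor>"]
    by (simp only: dindex_plus_one x_def y_def dindex_dcorner w_def vec_lambda_beta add_diff_cancel_left')
  then have "dindex beta (k + 1) y = dindex beta (k + 1) x"
    by (simp add: vec_eq_iff)
  then have "dindex beta k' y = dindex beta k' x"
    using lt dindex_eq_mono[of "k + 1" y x k'] by simp
  moreover have "dindex beta k' x = v'"
    using eq dcorner_mem_dcube[of beta k v] by (simp add: x_def mem_dcube_iff)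
  ultimately have "y \<in> dcube beta k v"
    using eq by (simp only: mem_dcube_iff)
  then have "w $ i = v $ i" for i
    by (simp add: y_def mem_dcube_iff dindex_dcorner)
  then have "flip (v $ i - \<lfloor>beta k $ i\<rfloor>) = v $ i - \<lfloor>beta k $ i\<rfloor>" for i
    unfolding w_def by (simp add: algebra_simps)
  then show False
    using flip_ne by blast
qed

lemma dlevel_Dk:
  assumes "Q \<in> Dk beta k"
  shows "dlevel beta Q = k"
  unfolding dlevel_def
proof (rule the_equality)
  show "Q \<in> Dk beta k" by (fact assms)
  show "k' = k" if Q': "Q \<in> Dk beta k'" for k'
  proof -
    obtain v where "Q = dcube beta k v" using assms unfolding Dk_def by blast
    moreover obtain v' where "Q = dcube beta k' v'" using Q' unfolding Dk_def by blast
    ultimately have eq: "dcube beta k v = dcube beta k' v'" by simp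
    have "\<not> k < k'" "\<not> k' < k"
      using dcube_not_coarser[OF eq] dcube_not_coarser[OF eq[symmetric]] by blast+
    then show ?thesis by simp
  qed
qed

lemma dyadic_Dk_dlevel: "Q \<in> dyadic beta \<Longrightarrow> Q \<in> Dk beta (dlevel beta Q)"
  unfolding dyadic_def by (metis UN_E dlevel_Dk)

lemma side_Dk: "Q \<in> Dk beta k \<Longrightarrow> side beta Q = 2 powr k"
  unfolding side_def by (subst dlevel_Dk) auto

lemma Dk_subset_if_common_point:
  assumes "Q \<in> Dk beta k" "F \<in> Dk beta k'" "x \<in> Q" "x \<in> F" "k \<le> k'"
  shows "Q \<subseteq> F"
  using Dk_eq_dcube_dindex[OF assms(1,3)] Dk_eq_dcube_dindex[OF assms(2,4)] dcube_dindex_mono[OF assms(5)]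
  by simp

lemma Dk_level_le_if_subset:
  assumes Q: "Q \<in> Dk beta k" and F: "F \<in> Dk beta k'" and "Q \<subseteq> F"
  shows "k \<le> k'"
proof (rule ccontr)
  assume "\<not> k \<le> k'"
  obtain x where "x \<in> Q" using Dk_nonempty[OF Q] by blast
  then have "F = Q"
    using Dk_subset_if_common_point[OF F Q] \<open>\<not> k \<le> k'\<close> \<open>Q \<subseteq> F\<close> by auto
  then show False
    using dlevel_Dk[OF Q] dlevel_Dk[OF F] \<open>\<not> k \<le> k'\<close> by simp
qed

lemma anc_eq_dcube:
  assumes "R \<in> Dk beta k" "x \<in> R"
  shows "anc beta j R = dcube beta (k + int j) (dindex beta (k + int j) x)"
  unfolding anc_def dlevel_Dk[OF assms(1)]
proof (rule the_equality)
  show "dcube beta (k + int j) (dindex beta (k + int j) x) \<in> Dk beta (k + int j) \<and>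
        R \<subseteq> dcube beta (k + int j) (dindex beta (k + int j) x)"
    using Dk_eq_dcube_dindex[OF assms] dcube_dindex_mono[of k "k + int j" x] by (simp add: Dk_def)
  show "P = dcube beta (k + int j) (dindex beta (k + int j) x)"
    if "P \<in> Dk beta (k + int j) \<and> R \<subseteq> P" for P
    using that assms(2) Dk_eq_dcube_dindex by blast
qed

lemma
  assumes "R \<in> Dk beta k"
  shows anc_Dk: "anc beta j R \<in> Dk beta (k + int j)"
    and subset_anc: "R \<subseteq> anc beta j R"
proof -
  obtain x where x: "x \<in> R" using Dk_nonempty[OF assms] by blast
  show "anc beta j R \<in> Dk beta (k + int j)"
    by (simp add: anc_eq_dcube[OF assms x] Dk_def)
  show "R \<subseteq> anc beta j R"
    unfolding anc_eq_dcube[OF assms x]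
    using Dk_eq_dcube_dindex[OF assms x] dcube_dindex_mono[of k "k + int j" x] by simp
qed

end


section \<open>Good cubes, stopping cubes and twisted martingale differences\<close>

lemma stopping_dyadic:
  assumes "Qs \<in> dyadic beta" "F \<in> stopping beta mu b A p Qs"
  shows "F \<in> dyadic beta"
proof -
  obtain j where "F \<in> stop_gen beta mu b A p Qs j"
    using assms(2) unfolding stopping_def by blast
  then show ?thesis using assms(1) by (cases j) auto
qed

lemma top_in_stopping: "Qs \<in> stopping beta mu b A p Qs"
  unfolding stopping_def by (metis UNIV_I UN_I insertI1 stop_gen.simps(1))

context dyadic_grid
begin

lemma good_far_from_outside_ancestor:
  assumes good: "good beta r \<gamma> R" and R: "R \<in> Dk beta k" and "r \<le> j"
    and x: "x \<in> R" and z: "z \<notin> anc beta j R"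
  shows "(2 powr k) powr \<gamma> * (2 powr (k + int j)) powr (1 - \<gamma>) < linf_dist x z"
proof -
  let ?J = "anc beta j R"
  have J: "?J \<in> Dk beta (k + int j)" by (rule anc_Dk[OF R])
  have "(2::real) ^ r * 2 powr k \<le> 2 ^ j * 2 powr k"
    using \<open>r \<le> j\<close> by (simp add: power_increasing)
  also have "\<dots> = 2 powr (k + int j)"
    by (simp add: powr_add powr_realpow[symmetric] mult.commute)
  finally have "2 ^ r * side beta R \<le> side beta ?J"
    using side_Dk[OF R] side_Dk[OF J] by simp
  then have "side beta R powr \<gamma> * side beta ?J powr (1 - \<gamma>) < linf_setdist R (frontier ?J)"
    using good Dk_dyadic[OF J] unfolding good_def bad_def by force
  also have "\<dots> \<le> linf_dist x z"
    using linf_setdist_frontier_le[OF x _ z] subset_anc[OF R] x by blast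
  finally show ?thesis
    using side_Dk[OF R] side_Dk[OF J] by simp
qed

text \<open>Dyadic cubes containing a fixed cube form a chain whose levels are bounded below.\<close>

lemma dyadic_supercubes_have_least:
  assumes T: "T \<subseteq> dyadic beta" "T \<noteq> {}" and Q: "Q \<in> dyadic beta" and QT: "\<And>F. F \<in> T \<Longrightarrow> Q \<subseteq> F"
  shows "\<exists>F0\<in>T. \<forall>F\<in>T. F0 \<subseteq> F"
proof -
  define l where "l = dlevel beta Q"
  have QD: "Q \<in> Dk beta l" unfolding l_def by (rule dyadic_Dk_dlevel[OF Q])
  obtain x where x: "x \<in> Q" using Dk_nonempty[OF QD] by blast
  have TD: "F \<in> Dk beta (dlevel beta F)" if "F \<in> T" for F
    using that T(1) dyadic_Dk_dlevel by blast
  have Tl: "l \<le> dlevel beta F" if "F \<in> T" for F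
    using Dk_level_le_if_subset[OF QD TD[OF that] QT[OF that]] .
  obtain F0 where F0: "F0 \<in> T" and F0_min: "\<And>F. F \<in> T \<Longrightarrow> dlevel beta F0 \<le> dlevel beta F"
  proof -
    define n0 where "n0 = (LEAST n. \<exists>F\<in>T. dlevel beta F = l + int n)"
    obtain F where "F \<in> T" using T(2) by blast
    then have ex: "\<exists>n. \<exists>F\<in>T. dlevel beta F = l + int n"
      using Tl by (intro exI[of _ "nat (dlevel beta F - l)"]) auto
    then obtain F0 where "F0 \<in> T" "dlevel beta F0 = l + int n0"
      using LeastI_ex[OF ex] unfolding n0_def by blast
    moreover have "n0 \<le> nat (dlevel beta F - l)" if "F \<in> T" for F
      unfolding n0_def using that Tl[OF that] by (intro Least_le) auto
    ultimately show thesis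
      using Tl that by fastforce
  qed
  have "F0 \<subseteq> F" if "F \<in> T" for F
    using Dk_subset_if_common_point[OF TD[OF F0] TD[OF that] _ _ F0_min[OF that]] x QT F0 that by blast
  then show ?thesis using F0 by blast
qed

lemma stop_parent_in_stopping:
  assumes Qs: "Qs \<in> dyadic beta" and Q: "Q \<in> dyadic beta" "Q \<subseteq> Qs"
  shows "stop_parent beta mu b A p Qs Q \<in> stopping beta mu b A p Qs"
proof -
  let ?S = "stopping beta mu b A p Qs"
  obtain F0 where F0: "F0 \<in> ?S" "Q \<subseteq> F0" and least: "\<And>F. F \<in> ?S \<Longrightarrow> Q \<subseteq> F \<Longrightarrow> F0 \<subseteq> F"
    using dyadic_supercubes_have_least[of "{F \<in> ?S. Q \<subseteq> F}" Q] Q top_in_stopping stopping_dyadic[OF Qs]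
    by blast
  have "stop_parent beta mu b A p Qs Q = F0"
    unfolding stop_parent_def
    by (rule the_equality) (use F0 least in blast)+
  then show ?thesis using F0 by simp
qed

lemma tDelta_borel_measurable:
  assumes mu_borel: "sets mu = sets borel"
    and Qs: "Qs \<in> dyadic beta" and Q: "Q \<in> dyadic beta" "Q \<subseteq> Qs"
    and b_meas: "\<And>Q. Q \<in> dyadic beta \<Longrightarrow> b Q \<in> borel_measurable mu"
  shows "tDelta beta mu b A p Qs Q f \<in> borel_measurable borel"
proof -
  have b_parent: "b (stop_parent beta mu b A p Qs Q') \<in> borel_measurable borel"
    if "Q' \<in> dyadic beta" "Q' \<subseteq> Qs" for Q'
    using b_meas stopping_dyadic[OF Qs stop_parent_in_stopping[OF Qs that]]
    by (simp add: measurable_cong_sets[OF mu_borel refl])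
  have child: "Q' \<in> Dk beta (dlevel beta Q - 1)" "Q' \<subseteq> Q" if "Q' \<in> children beta Q" for Q'
    using that unfolding children_def by blast+
  have "(\<lambda>x. indicator Q' x *
          (avg mu Q' f / avg mu Q' (b (stop_parent beta mu b A p Qs Q')) * b (stop_parent beta mu b A p Qs Q') x
           - avg mu Q f / avg mu Q (b (stop_parent beta mu b A p Qs Q)) * b (stop_parent beta mu b A p Qs Q) x))
        \<in> borel_measurable borel" if "Q' \<in> children beta Q" for Q'
  proof -
    have "Q' \<in> dyadic beta" "Q' \<in> sets borel"
      using child[OF that] Dk_dyadic Dk_borel by blast+
    then show ?thesis
      using b_parent[of Q'] b_parent[OF Q] child[OF that] Q
      by (intro borel_measurable_times borel_measurable_indicator' borel_measurable_diff
          borel_measurable_const) auto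
  qed
  moreover have "b Qs \<in> borel_measurable borel"
    using b_meas[OF Qs] by (simp add: measurable_cong_sets[OF mu_borel refl])
  ultimately show ?thesis
    unfolding tDelta_def by measurable
qed

end


section \<open>Integrals of the tail weight under the growth condition\<close>

text \<open>The weight \<open>(t / (t + |c - y|)) powr \<beta>\<close> is at most \<open>2 powr \<beta> * 2 powr (- j * \<beta>)\<close> on the ball
  of radius \<open>2 ^ j * t\<close>; summing the growth bounds \<open>C * (2 ^ j * t) powr m\<close> of these balls gives a
  geometric series with ratio \<open>2 powr (m - \<beta>)\<close>, whence \<open>tail_const\<close>.\<close>

definition tail_const :: "real \<Rightarrow> real \<Rightarrow> real \<Rightarrow> real" where
  "tail_const C m \<beta> = max C 0 * 2 powr \<beta> / (1 - 2 powr (m - \<beta>))"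

lemma tail_const_nonneg: "m < \<beta> \<Longrightarrow> 0 \<le> tail_const C m \<beta>"
  using powr_less_mono[of "m - \<beta>" 0 2] unfolding tail_const_def by simp

lemma tail_weight_le_suminf_balls:
  assumes t: "t > 0" and \<beta>: "\<beta> \<ge> 0"
  shows "ennreal ((t / (t + linf_dist c y)) powr \<beta>) \<le>
    (\<Sum>j. ennreal (2 powr \<beta> * ((1/2) powr \<beta>) ^ j) * indicator (linf_ball c (2 ^ j * t)) y)"
proof -
  let ?\<rho> = "linf_dist c y"
  have \<rho>0: "?\<rho> \<ge> 0" by (rule linf_dist_nonneg)
  have ex: "\<exists>j. ?\<rho> / t < 2 ^ j" using real_arch_pow[of 2 "?\<rho> / t"] by simp
  define j where "j = (LEAST j. ?\<rho> / t < (2::real) ^ j)"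
  have jin: "?\<rho> < 2 ^ j * t"
    using LeastI_ex[OF ex] t unfolding j_def by (simp add: pos_divide_less_eq)
  have bound: "(t / (t + ?\<rho>)) powr \<beta> \<le> 2 powr \<beta> * ((1/2) powr \<beta>) ^ j"
  proof (cases j)
    case 0
    have "(t / (t + ?\<rho>)) powr \<beta> \<le> 1" using t \<rho>0 \<beta> by (intro powr_le1) auto
    also have "1 \<le> 2 powr \<beta>" using \<beta> powr_mono[of 0 \<beta> 2] by simp
    finally show ?thesis using 0 by simp
  next
    case (Suc j')
    have "\<not> ?\<rho> / t < 2 ^ j'" unfolding j_def using Suc j_def not_less_Least by (metis lessI)
    then have "t * 2 ^ j' \<le> t + ?\<rho>" using t by (simp add: pos_divide_less_eq not_less mult.commute)
    then have "t / (t + ?\<rho>) \<le> (1/2) ^ j'" using t \<rho>0 by (simp add: divide_simps power_divide)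
    then have "(t / (t + ?\<rho>)) powr \<beta> \<le> ((1/2) ^ j') powr \<beta>" using t \<rho>0 \<beta> by (intro powr_mono2) auto
    also have "\<dots> = ((1/2) powr \<beta>) ^ j'"
      by (simp add: powr_realpow[symmetric] powr_powr powr_power mult.commute)
    also have "\<dots> = 2 powr \<beta> * ((1/2) powr \<beta>) ^ j"
      using Suc by (simp add: mult.assoc[symmetric] powr_mult[symmetric])
    finally show ?thesis .
  qed
  define w where "w = (\<lambda>j. ennreal (2 powr \<beta> * ((1/2) powr \<beta>) ^ j) * indicator (linf_ball c (2 ^ j * t)) y)"
  then have "ennreal ((t / (t + ?\<rho>)) powr \<beta>) \<le> w j"
    using bound jin by (simp add: linf_ball_def indicator_def)
  also have "w j \<le> suminf w"
    using sum_le_suminf[OF summableI, of "{j}" w] by simp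
  finally show ?thesis unfolding w_def .
qed

lemma nn_integral_tail_weight_le:
  assumes mu_borel: "sets mu = sets borel"
    and growth: "\<And>x \<rho>. \<rho> > 0 \<Longrightarrow> emeasure mu (linf_ball x \<rho>) \<le> ennreal (C * \<rho> powr m)"
    and m: "m > 0" and \<beta>: "\<beta> > m" and t: "t > 0"
  shows "(\<integral>\<^sup>+ y. ennreal ((t / (t + linf_dist c y)) powr \<beta>) \<partial>mu) \<le> ennreal (tail_const C m \<beta> * t powr m)"
proof -
  define q where "q = (1/2) powr \<beta> * 2 powr m"
  define a where "a = (\<lambda>j. 2 powr \<beta> * ((1/2::real) powr \<beta>) ^ j)"
  have q_eq: "q = 2 powr (m - \<beta>)" unfolding q_def by (simp add: powr_divide powr_diff)
  have q1: "q < 1" unfolding q_eq using \<beta> powr_less_mono[of "m - \<beta>" 0 2] by simp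
  have q0: "q \<ge> 0" unfolding q_def by simp
  have ball_term: "ennreal (a j) * emeasure mu (linf_ball c (2 ^ j * t))
      \<le> ennreal (max C 0 * 2 powr \<beta> * t powr m * q ^ j)" for j
  proof -
    have "emeasure mu (linf_ball c (2 ^ j * t)) \<le> ennreal (max C 0 * (2 ^ j * t) powr m)"
      using growth[of "2 ^ j * t" c] t by (auto intro: order_trans ennreal_leI mult_right_mono)
    then have "ennreal (a j) * emeasure mu (linf_ball c (2 ^ j * t))
        \<le> ennreal (a j) * ennreal (max C 0 * (2 ^ j * t) powr m)"
      by (rule mult_left_mono) simp
    also have "\<dots> = ennreal (a j * (max C 0 * (2 ^ j * t) powr m))"
      unfolding a_def by (simp add: ennreal_mult)
    also have "a j * (max C 0 * (2 ^ j * t) powr m) = max C 0 * 2 powr \<beta> * t powr m * q ^ j"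
      using t unfolding a_def q_def
      by (simp add: powr_mult powr_realpow[symmetric] powr_powr powr_power power_mult_distrib algebra_simps)
    finally show ?thesis .
  qed
  have "(\<integral>\<^sup>+ y. ennreal ((t / (t + linf_dist c y)) powr \<beta>) \<partial>mu)
      \<le> (\<integral>\<^sup>+ y. (\<Sum>j. ennreal (a j) * indicator (linf_ball c (2 ^ j * t)) y) \<partial>mu)"
    unfolding a_def using t \<beta> m by (intro nn_integral_mono tail_weight_le_suminf_balls) auto
  also have "\<dots> = (\<Sum>j. ennreal (a j) * emeasure mu (linf_ball c (2 ^ j * t)))"
    by (subst nn_integral_suminf) (simp_all add: mu_borel measurable_cong_sets[OF mu_borel refl]
        nn_integral_cmult_indicator)
  also have "\<dots> \<le> (\<Sum>j. ennreal (max C 0 * 2 powr \<beta> * t powr m * q ^ j))"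
    by (intro suminf_le ball_term) auto
  also have "\<dots> = ennreal (\<Sum>j. max C 0 * 2 powr \<beta> * t powr m * q ^ j)"
    using q0 q1 by (intro suminf_ennreal2 summable_mult summable_geometric) auto
  also have "(\<Sum>j. max C 0 * 2 powr \<beta> * t powr m * q ^ j) = tail_const C m \<beta> * t powr m"
    using q0 q1 unfolding tail_const_def q_eq[symmetric]
    by (simp add: suminf_mult summable_geometric suminf_geometric)
  finally show ?thesis .
qed

lemma nn_integral_scaled_tail_weight_le:
  assumes "sets mu = sets borel"
    and "\<And>x \<rho>. \<rho> > 0 \<Longrightarrow> emeasure mu (linf_ball x \<rho>) \<le> ennreal (C * \<rho> powr m)"
    and "m > 0" "\<beta> > m" "t > 0" and c: "c \<ge> 0"
  shows "(\<integral>\<^sup>+ y. ennreal (c * ((t / (t + linf_dist z y)) powr \<beta> / t powr m)) \<partial>mu)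
    \<le> ennreal (c * tail_const C m \<beta>)"
proof -
  have "(\<integral>\<^sup>+ y. ennreal (c * ((t / (t + linf_dist z y)) powr \<beta> / t powr m)) \<partial>mu)
      = (\<integral>\<^sup>+ y. ennreal (c / t powr m) * ennreal ((t / (t + linf_dist z y)) powr \<beta>) \<partial>mu)"
    by (intro nn_integral_cong) (use c in \<open>simp add: ennreal_mult[symmetric]\<close>)
  also have "\<dots> = ennreal (c / t powr m) * (\<integral>\<^sup>+ y. ennreal ((t / (t + linf_dist z y)) powr \<beta>) \<partial>mu)"
    by (rule nn_integral_cmult) (simp add: measurable_cong_sets[OF assms(1) refl])
  also have "\<dots> \<le> ennreal (c / t powr m) * ennreal (tail_const C m \<beta> * t powr m)"
    by (intro mult_left_mono nn_integral_tail_weight_le assms) auto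
  also have "\<dots> = ennreal (c * tail_const C m \<beta>)"
    using c \<open>t > 0\<close> tail_const_nonneg[OF \<open>\<beta> > m\<close>] by (simp add: ennreal_mult[symmetric])
  finally show ?thesis .
qed

lemma sigma_finite_if_growth:
  fixes mu :: "(real ^ 'n) measure"
  assumes mu_borel: "sets mu = sets borel"
    and growth: "\<And>x \<rho>. \<rho> > 0 \<Longrightarrow> emeasure mu (linf_ball x \<rho>) \<le> ennreal (C * \<rho> powr m)"
  shows "sigma_finite_measure mu"
proof
  let ?A = "range (\<lambda>n::nat. linf_ball (0::real^'n) (real n + 1))"
  have "y \<in> \<Union> ?A" for y
  proof -
    obtain n :: nat where "linf_dist 0 y < real n" using reals_Archimedean2 by blast
    then show ?thesis by (auto simp: linf_ball_def intro!: exI[of _ n])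
  qed
  moreover have "emeasure mu (linf_ball 0 (real n + 1)) \<noteq> \<infinity>" for n :: nat
    using growth[of "real n + 1" 0] by (auto simp: top_unique)
  ultimately show "\<exists>A. countable A \<and> A \<subseteq> sets mu \<and> \<Union> A = space mu \<and> (\<forall>a\<in>A. emeasure mu a \<noteq> \<infinity>)"
    using sets_eq_imp_space_eq[OF mu_borel] mu_borel by (intro exI[of _ ?A]) auto
qed


section \<open>The kernel against the weight\<close>

lemma kernel_bound_sq_eq:
  fixes t a :: real
  assumes "t > 0" "a \<ge> 0"
  shows "(Cs * t powr \<alpha> / (t + a) powr (m + \<alpha>))\<^sup>2
    = Cs\<^sup>2 * t powr (- 2 * m) * (t / (t + a)) powr (2 * m + 2 * \<alpha>)"
proof -
  have "t powr \<alpha> / (t + a) powr (m + \<alpha>) = t powr (- m) * (t / (t + a)) powr (m + \<alpha>)"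
    using assms by (simp add: powr_divide powr_add[symmetric])
  then have "(Cs * t powr \<alpha> / (t + a) powr (m + \<alpha>))\<^sup>2
      = Cs\<^sup>2 * (t powr (- m))\<^sup>2 * ((t / (t + a)) powr (m + \<alpha>))\<^sup>2"
    by (metis times_divide_eq_right power_mult_distrib mult.assoc)
  also have "\<dots> = Cs\<^sup>2 * t powr (- 2 * m) * (t / (t + a)) powr (2 * m + 2 * \<alpha>)"
    using assms by (simp add: powr_power algebra_simps)
  finally show ?thesis .
qed

lemma kernel_bound_sq_le_at_distance:
  fixes t a d :: real
  assumes "t > 0" "d > 0" "d / 2 \<le> a" "m + \<alpha> \<ge> 0"
  shows "(Cs * t powr \<alpha> / (t + a) powr (m + \<alpha>))\<^sup>2 \<le> Cs\<^sup>2 * t powr (2 * \<alpha>) * (d / 2) powr (- (2 * (m + \<alpha>)))"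
proof -
  have "(d / 2) powr (m + \<alpha>) \<le> (t + a) powr (m + \<alpha>)"
    using assms by (intro powr_mono2) auto
  then have "t powr \<alpha> / (t + a) powr (m + \<alpha>) \<le> t powr \<alpha> / (d / 2) powr (m + \<alpha>)"
    using assms by (intro divide_left_mono) auto
  then have "(t powr \<alpha> / (t + a) powr (m + \<alpha>))\<^sup>2 \<le> (t powr \<alpha> / (d / 2) powr (m + \<alpha>))\<^sup>2"
    by (intro power_mono) auto
  also have "\<dots> = t powr (2 * \<alpha>) / (d / 2) powr (2 * (m + \<alpha>))"
    using assms by (simp add: power_divide powr_power)
  also have "\<dots> = t powr (2 * \<alpha>) * (d / 2) powr (- (2 * (m + \<alpha>)))"
    by (simp only: powr_minus divide_inverse)
  finally have "Cs\<^sup>2 * (t powr \<alpha> / (t + a) powr (m + \<alpha>))\<^sup>2 \<le> Cs\<^sup>2 * (t powr (2 * \<alpha>) * (d / 2) powr (- (2 * (m + \<alpha>))))"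
    by (rule mult_left_mono) simp
  then show ?thesis
    by (metis times_divide_eq_right power_mult_distrib mult.assoc)
qed

text \<open>If \<open>|x - z| \<ge> d\<close>, then every \<open>y\<close> is at distance \<open>\<ge> d/2\<close> from \<open>z\<close> (where the kernel is
  small) or from \<open>x\<close> (where the weight is small).\<close>

lemma kernel_weight_split:
  fixes t d \<rho> a S ml :: real
  assumes t: "t > 0" and d: "d > 0" and \<rho>: "\<rho> \<ge> 0" and a: "a \<ge> 0" and tri: "d \<le> \<rho> + a"
    and ml: "ml \<ge> 0" and m\<alpha>: "m + \<alpha> \<ge> 0"
    and S: "0 \<le> S" "S \<le> (Cs * t powr \<alpha> / (t + a) powr (m + \<alpha>))\<^sup>2"
  shows "S * ((t / (t + \<rho>)) powr ml / t powr m)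
    \<le> Cs\<^sup>2 * t powr (2 * \<alpha>) * (d / 2) powr (- (2 * (m + \<alpha>))) * ((t / (t + \<rho>)) powr ml / t powr m)
      + (2 * t / d) powr ml * Cs\<^sup>2 * t powr (- 2 * m) * ((t / (t + a)) powr (2 * m + 2 * \<alpha>) / t powr m)"
    (is "_ \<le> ?near + ?far")
proof (cases "d / 2 \<le> a")
  case True
  then have "S \<le> Cs\<^sup>2 * t powr (2 * \<alpha>) * (d / 2) powr (- (2 * (m + \<alpha>)))"
    using S(2) kernel_bound_sq_le_at_distance[OF t d True m\<alpha>, of Cs] by linarith
  then have "S * ((t / (t + \<rho>)) powr ml / t powr m) \<le> ?near"
    by (rule mult_right_mono) simp
  moreover have "0 \<le> ?far" by simp
  ultimately show ?thesis by linarith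
next
  case False
  then have "t / (t + \<rho>) \<le> t / (d / 2)"
    using t d \<rho> tri by (intro divide_left_mono) auto
  then have "t / (t + \<rho>) \<le> 2 * t / d"
    by (simp add: mult.commute)
  then have "(t / (t + \<rho>)) powr ml \<le> (2 * t / d) powr ml"
    using t \<rho> ml by (intro powr_mono2) auto
  then have "S * ((t / (t + \<rho>)) powr ml / t powr m) \<le> S * ((2 * t / d) powr ml / t powr m)"
    using S(1) by (intro mult_left_mono divide_right_mono) auto
  also have "\<dots> = (2 * t / d) powr ml * (S / t powr m)"
    by simp
  also have "\<dots> \<le> (2 * t / d) powr ml * (Cs\<^sup>2 * t powr (- 2 * m) * (t / (t + a)) powr (2 * m + 2 * \<alpha>) / t powr m)"
    using S(2) kernel_bound_sq_eq[OF t a, of Cs \<alpha> m] by (intro mult_left_mono divide_right_mono) auto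
  also have "\<dots> = ?far"
    by (simp add: ac_simps)
  finally have "S * ((t / (t + \<rho>)) powr ml / t powr m) \<le> ?far" .
  moreover have "0 \<le> ?near" by simp
  ultimately show ?thesis by linarith
qed

lemma nn_integral_kernel_weight_le:
  fixes s :: "real ^ 'n \<Rightarrow> complex"
  assumes mu_borel: "sets mu = sets borel"
    and growth: "\<And>x \<rho>. \<rho> > 0 \<Longrightarrow> emeasure mu (linf_ball x \<rho>) \<le> ennreal (C * \<rho> powr m)"
    and m: "m > 0" and lam: "lam > 2" and \<alpha>: "\<alpha> > 0"
    and s_meas: "s \<in> borel_measurable borel"
    and s_size: "\<And>y. norm (s y) \<le> Cs * t powr \<alpha> / (t + linf_dist y z) powr (m + \<alpha>)"
    and t: "t > 0" and d: "d > 0" "d \<le> linf_dist x z"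
  shows "(\<integral>\<^sup>+ y. ennreal ((cmod (s y))\<^sup>2 * ((t / (t + linf_dist x y)) powr (m * lam) / t powr m)) \<partial>mu)
    \<le> ennreal (Cs\<^sup>2 * t powr (2 * \<alpha>) * (d / 2) powr (- (2 * (m + \<alpha>))) * tail_const C m (m * lam)
      + (2 * t / d) powr (m * lam) * Cs\<^sup>2 * t powr (- 2 * m) * tail_const C m (2 * m + 2 * \<alpha>))"
proof -
  define c1 where "c1 = Cs\<^sup>2 * t powr (2 * \<alpha>) * (d / 2) powr (- (2 * (m + \<alpha>)))"
  define c2 where "c2 = (2 * t / d) powr (m * lam) * Cs\<^sup>2 * t powr (- 2 * m)"
  define w where "w = (\<lambda>\<beta> (c :: real ^ 'n) y. (t / (t + linf_dist c y)) powr \<beta> / t powr m)"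
  have c: "c1 \<ge> 0" "c2 \<ge> 0" unfolding c1_def c2_def by simp_all
  have [measurable]: "w \<beta> c \<in> borel_measurable mu" for \<beta> c
    unfolding w_def measurable_cong_sets[OF mu_borel refl] by measurable
  have "ennreal ((cmod (s y))\<^sup>2 * w (m * lam) x y)
      \<le> ennreal (c1 * w (m * lam) x y) + ennreal (c2 * w (2 * m + 2 * \<alpha>) z y)" for y
  proof -
    have "(cmod (s y))\<^sup>2 \<le> (Cs * t powr \<alpha> / (t + linf_dist y z) powr (m + \<alpha>))\<^sup>2"
      using s_size[of y] by (intro power_mono) auto
    then have "(cmod (s y))\<^sup>2 * w (m * lam) x y \<le> c1 * w (m * lam) x y + c2 * w (2 * m + 2 * \<alpha>) z y"
      unfolding c1_def c2_def w_def linf_dist_commute[of z y]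
      using m lam \<alpha> d linf_dist_triangle[of x z y]
      by (intro kernel_weight_split[OF t d(1) linf_dist_nonneg linf_dist_nonneg]) auto
    then show ?thesis
      using c by (simp add: w_def ennreal_plus[symmetric] del: ennreal_plus)
  qed
  then have "(\<integral>\<^sup>+ y. ennreal ((cmod (s y))\<^sup>2 * w (m * lam) x y) \<partial>mu)
      \<le> (\<integral>\<^sup>+ y. ennreal (c1 * w (m * lam) x y) \<partial>mu) + (\<integral>\<^sup>+ y. ennreal (c2 * w (2 * m + 2 * \<alpha>) z y) \<partial>mu)"
    by (subst nn_integral_add[symmetric]) (auto intro: nn_integral_mono)
  also have "\<dots> \<le> ennreal (c1 * tail_const C m (m * lam)) + ennreal (c2 * tail_const C m (2 * m + 2 * \<alpha>))"
    unfolding w_def using m lam \<alpha> t c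
    by (intro add_mono nn_integral_scaled_tail_weight_le[OF mu_borel growth]) auto
  also have "\<dots> = ennreal (c1 * tail_const C m (m * lam) + c2 * tail_const C m (2 * m + 2 * \<alpha>))"
    using c m lam \<alpha> by (intro ennreal_plus[symmetric] mult_nonneg_nonneg tail_const_nonneg) auto
  finally show ?thesis
    unfolding c1_def c2_def w_def by (simp add: mult.assoc)
qed

text \<open>For \<open>d = 2 powr (k + (i - 1) * (1 - \<gamma>))\<close> and \<open>t \<approx> 2 powr k\<close> both factors of the kernel bound
  decay like \<open>2 powr (- \<alpha> * i) * 2 powr (- 2 * (k + i) * m)\<close>; this is where \<open>\<gamma> \<le> \<alpha> / (2 * (m + \<alpha>))\<close>
  and \<open>\<alpha> \<le> m * (lam - 2) / 2\<close> are used.\<close>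

lemma kernel_decay_factor_le:
  fixes k i t d :: real
  assumes m: "m > 0" and \<alpha>: "\<alpha> > 0" and \<gamma>: "0 < \<gamma>" "\<gamma> \<le> \<alpha> / (2 * (m + \<alpha>))" and i: "i \<ge> 1"
    and t: "0 < t" "t \<le> 2 powr k" and d: "d = 2 powr (k + (i - 1) * (1 - \<gamma>))"
  shows "t powr (2 * \<alpha>) * (d / 2) powr (- (2 * (m + \<alpha>)))
    \<le> 2 powr (4 * (m + \<alpha>)) * 2 powr (- \<alpha> * i) * 2 powr (- 2 * (k + i) * m)"
proof -
  have g: "2 * (m + \<alpha>) * (1 - \<gamma>) \<ge> 2 * m + \<alpha>"
    using \<gamma>(2) m \<alpha> by (simp add: field_simps)
  have "t powr (2 * \<alpha>) \<le> (2 powr k) powr (2 * \<alpha>)"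
    using t \<alpha> by (intro powr_mono2) auto
  then have "t powr (2 * \<alpha>) * (d / 2) powr (- (2 * (m + \<alpha>)))
      \<le> 2 powr (k * (2 * \<alpha>)) * (d / 2) powr (- (2 * (m + \<alpha>)))"
    by (intro mult_right_mono) (auto simp: powr_powr)
  also have "\<dots> = 2 powr (k * (2 * \<alpha>) - (k + (i - 1) * (1 - \<gamma>) - 1) * (2 * (m + \<alpha>)))"
  proof -
    have "d / 2 = 2 powr (k + (i - 1) * (1 - \<gamma>) - 1)" unfolding d by (simp add: powr_diff)
    then show ?thesis
      by (simp add: powr_powr powr_add[symmetric]) (rule arg_cong[where f="(powr) 2"], simp add: algebra_simps)
  qed
  also have "\<dots> \<le> 2 powr (4 * (m + \<alpha>) - \<alpha> * i - 2 * (k + i) * m)"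
  proof (rule powr_mono)
    have "(2 * (m + \<alpha>) * (1 - \<gamma>) - (2 * m + \<alpha>)) * (i - 1) \<ge> 0" using g i by simp
    moreover have "2 * (m + \<alpha>) * \<gamma> \<ge> 0" using m \<alpha> \<gamma> by simp
    ultimately show "k * (2 * \<alpha>) - (k + (i - 1) * (1 - \<gamma>) - 1) * (2 * (m + \<alpha>))
        \<le> 4 * (m + \<alpha>) - \<alpha> * i - 2 * (k + i) * m"
      using \<alpha> m by (simp add: algebra_simps)
  qed simp
  also have "\<dots> = 2 powr (4 * (m + \<alpha>)) * 2 powr (- \<alpha> * i) * 2 powr (- 2 * (k + i) * m)"
    by (simp add: powr_add[symmetric] algebra_simps)
  finally show ?thesis .
qed

lemma weight_decay_factor_le:
  fixes k i t d :: real
  assumes m: "m > 0" and lam: "lam > 2" and \<alpha>: "\<alpha> > 0" "\<alpha> \<le> m * (lam - 2) / 2"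
    and \<gamma>: "0 < \<gamma>" "\<gamma> < 1/2" "\<gamma> \<le> \<alpha> / (2 * (m + \<alpha>))" and i: "i \<ge> 1"
    and t: "2 powr (k - 1) < t" "t \<le> 2 powr k" and d: "d = 2 powr (k + (i - 1) * (1 - \<gamma>))"
  shows "(2 * t / d) powr (m * lam) * t powr (- 2 * m)
    \<le> 2 powr (2 * m * lam) * 2 powr (2 * m) * 2 powr (- \<alpha> * i) * 2 powr (- 2 * (k + i) * m)"
proof -
  have t0: "t > 0" using t(1) powr_gt_zero[of 2 "k - 1"] by linarith
  have g: "m * lam * (1 - \<gamma>) \<ge> 2 * m + \<alpha>"
  proof -
    have "m * lam * (1 - \<gamma>) \<ge> (2 * m + 2 * \<alpha>) * (1 - \<gamma>)"
      using \<alpha>(2) \<gamma> by (intro mult_right_mono) (auto simp: algebra_simps)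
    moreover have "2 * (m + \<alpha>) * \<gamma> \<le> \<alpha>" using \<gamma>(3) m \<alpha> by (simp add: field_simps)
    ultimately show ?thesis by (simp add: algebra_simps)
  qed
  have "2 * t / d \<le> 2 * 2 powr k / d"
    using t by (intro divide_right_mono) (auto simp: d)
  also have "\<dots> = 2 powr (1 - (i - 1) * (1 - \<gamma>))"
    unfolding d by (simp add: powr_diff powr_add)
  finally have "(2 * t / d) powr (m * lam) \<le> 2 powr ((1 - (i - 1) * (1 - \<gamma>)) * (m * lam))"
    using t0 m lam by (subst powr_powr[symmetric], intro powr_mono2) (auto simp: d)
  moreover have "t powr (- 2 * m) \<le> 2 powr ((k - 1) * (- 2 * m))"
    using t0 t(1) m powr_mono2'[of "- 2 * m" "2 powr (k - 1)" t] by (simp add: powr_powr)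
  ultimately have "(2 * t / d) powr (m * lam) * t powr (- 2 * m)
      \<le> 2 powr ((1 - (i - 1) * (1 - \<gamma>)) * (m * lam)) * 2 powr ((k - 1) * (- 2 * m))"
    by (intro mult_mono) auto
  also have "\<dots> = 2 powr ((1 - (i - 1) * (1 - \<gamma>)) * (m * lam) + (k - 1) * (- 2 * m))"
    by (rule powr_add[symmetric])
  also have "\<dots> \<le> 2 powr (2 * m * lam + 2 * m - \<alpha> * i - 2 * (k + i) * m)"
  proof (rule powr_mono)
    have "(m * lam * (1 - \<gamma>) - (2 * m + \<alpha>)) * (i - 1) \<ge> 0" using g i by simp
    moreover have "m * lam * \<gamma> \<ge> 0" using m lam \<gamma> by simp
    ultimately show "(1 - (i - 1) * (1 - \<gamma>)) * (m * lam) + (k - 1) * (- 2 * m)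
        \<le> 2 * m * lam + 2 * m - \<alpha> * i - 2 * (k + i) * m"
      using \<alpha> m by (simp add: algebra_simps)
  qed simp
  also have "\<dots> = 2 powr (2 * m * lam) * 2 powr (2 * m) * 2 powr (- \<alpha> * i) * 2 powr (- 2 * (k + i) * m)"
    by (simp add: powr_add[symmetric] algebra_simps)
  finally show ?thesis .
qed


section \<open>Cauchy--Schwarz and Tonelli\<close>

lemma cmod_integral_sq_le:
  fixes f g :: "'a \<Rightarrow> complex"
  assumes [measurable]: "f \<in> borel_measurable mu" "g \<in> borel_measurable mu"
  shows "ennreal ((cmod (LINT z|mu. f z * g z))\<^sup>2)
    \<le> (\<integral>\<^sup>+ z. ennreal ((cmod (f z))\<^sup>2 * cmod (g z)) \<partial>mu) * (\<integral>\<^sup>+ z. ennreal (cmod (g z)) \<partial>mu)"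
proof -
  have "ennreal (cmod (LINT z|mu. f z * g z)) \<le> (\<integral>\<^sup>+ z. ennreal (cmod (f z) * cmod (g z)) \<partial>mu)"
  proof (cases "integrable mu (\<lambda>z. f z * g z)")
    case True
    then show ?thesis using integral_norm_bound_ennreal[OF True] by (simp add: norm_mult)
  qed (simp add: not_integrable_integral_eq)
  then have "ennreal ((cmod (LINT z|mu. f z * g z))\<^sup>2) \<le> (\<integral>\<^sup>+ z. ennreal (cmod (f z) * cmod (g z)) \<partial>mu)\<^sup>2"
    by (simp add: ennreal_power[symmetric] power_mono)
  also have "\<dots> = (\<integral>\<^sup>+ z. ennreal (cmod (f z) * sqrt (cmod (g z))) * ennreal (sqrt (cmod (g z))) \<partial>mu)\<^sup>2"
    by (simp add: ennreal_mult[symmetric] mult.assoc)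
  also have "\<dots> \<le> (\<integral>\<^sup>+ z. (ennreal (cmod (f z) * sqrt (cmod (g z))))\<^sup>2 \<partial>mu)
      * (\<integral>\<^sup>+ z. (ennreal (sqrt (cmod (g z))))\<^sup>2 \<partial>mu)"
    by (rule Cauchy_Schwarz_nn_integral) simp_all
  also have "\<dots> = (\<integral>\<^sup>+ z. ennreal ((cmod (f z))\<^sup>2 * cmod (g z)) \<partial>mu) * (\<integral>\<^sup>+ z. ennreal (cmod (g z)) \<partial>mu)"
    by (simp add: ennreal_power power_mult_distrib)
  finally show ?thesis .
qed

lemma nn_integral_sq_kernel_integral_le:
  fixes mu :: "'a::second_countable_topology measure"
    and s :: "'a \<Rightarrow> 'a \<Rightarrow> complex" and g :: "'a \<Rightarrow> complex" and W :: "'a \<Rightarrow> real"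
  assumes sf: "sigma_finite_measure mu" and mu_borel: "sets mu = sets borel"
    and s_meas: "(\<lambda>w. s (fst w) (snd w)) \<in> borel_measurable (borel \<Otimes>\<^sub>M borel)"
    and g_meas: "g \<in> borel_measurable borel"
    and W_meas: "W \<in> borel_measurable borel" and W_nonneg: "\<And>y. W y \<ge> 0"
    and column: "\<And>z. g z \<noteq> 0 \<Longrightarrow> (\<integral>\<^sup>+ y. ennreal ((cmod (s y z))\<^sup>2 * W y) \<partial>mu) \<le> ennreal K"
  shows "(\<integral>\<^sup>+ y. ennreal ((cmod (LINT z|mu. s y z * g z))\<^sup>2 * W y) \<partial>mu)
    \<le> (\<integral>\<^sup>+ z. ennreal (cmod (g z)) \<partial>mu)\<^sup>2 * ennreal K"
proof -
  interpret pair_sigma_finite mu mu using sf by (simp add: pair_sigma_finite_def)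
  have mc: "measurable mu N = measurable borel N" for N :: "'b measure"
    by (rule measurable_cong_sets[OF mu_borel refl])
  have mc2: "measurable (mu \<Otimes>\<^sub>M mu) N = measurable (borel \<Otimes>\<^sub>M borel) N" for N :: "'b measure"
    by (rule measurable_cong_sets[OF sets_pair_measure_cong[OF mu_borel mu_borel] refl])
  have [measurable]: "(\<lambda>z. s y z) \<in> borel_measurable borel" "(\<lambda>y. s y z) \<in> borel_measurable borel"
    "(\<lambda>w. s (snd w) (fst w)) \<in> borel_measurable (borel \<Otimes>\<^sub>M borel)" for y z
    using measurable_Pair2[OF s_meas, of y] measurable_comp[OF measurable_Pair2'[of z borel borel] s_meas]
      measurable_comp[OF measurable_pair_swap'[of borel borel] s_meas]
    by (simp_all add: o_def case_prod_beta)
  note [measurable] = g_meas W_meas s_meas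
  define G where "G = (\<integral>\<^sup>+ z. ennreal (cmod (g z)) \<partial>mu)"
  define F where "F = (\<lambda>y z. ennreal ((cmod (s y z))\<^sup>2 * cmod (g z) * W y))"
  have [measurable]: "(\<lambda>w. F (fst w) (snd w)) \<in> borel_measurable (mu \<Otimes>\<^sub>M mu)"
    "(\<lambda>w. F (snd w) (fst w)) \<in> borel_measurable (mu \<Otimes>\<^sub>M mu)"
    unfolding F_def mc2 by measurable
  have "(\<integral>\<^sup>+ y. ennreal ((cmod (LINT z|mu. s y z * g z))\<^sup>2 * W y) \<partial>mu)
      \<le> (\<integral>\<^sup>+ y. G * (\<integral>\<^sup>+ z. F y z \<partial>mu) \<partial>mu)"
  proof (rule nn_integral_mono)
    fix y
    have F_y: "(\<integral>\<^sup>+ z. ennreal ((cmod (s y z))\<^sup>2 * cmod (g z)) \<partial>mu) * ennreal (W y) = (\<integral>\<^sup>+ z. F y z \<partial>mu)"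
      unfolding F_def using W_nonneg
      by (subst nn_integral_multc[symmetric]) (simp_all add: mc ennreal_mult)
    have "ennreal ((cmod (LINT z|mu. s y z * g z))\<^sup>2 * W y)
        = ennreal ((cmod (LINT z|mu. s y z * g z))\<^sup>2) * ennreal (W y)"
      using W_nonneg by (simp add: ennreal_mult)
    also have "\<dots> \<le> (\<integral>\<^sup>+ z. ennreal ((cmod (s y z))\<^sup>2 * cmod (g z)) \<partial>mu) * G * ennreal (W y)"
      unfolding G_def by (intro mult_right_mono cmod_integral_sq_le) (simp_all add: mc)
    also have "\<dots> = G * (\<integral>\<^sup>+ z. F y z \<partial>mu)"
      by (simp add: F_y[symmetric] mult_ac)
    finally show "ennreal ((cmod (LINT z|mu. s y z * g z))\<^sup>2 * W y) \<le> G * (\<integral>\<^sup>+ z. F y z \<partial>mu)" .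
  qed
  also have "\<dots> = G * (\<integral>\<^sup>+ y. (\<integral>\<^sup>+ z. F y z \<partial>mu) \<partial>mu)"
    using sigma_finite_measure.borel_measurable_nn_integral_fst[OF sf, of "\<lambda>w. F (fst w) (snd w)"]
    by (intro nn_integral_cmult) simp
  also have "\<dots> = G * (\<integral>\<^sup>+ z. (\<integral>\<^sup>+ y. F y z \<partial>mu) \<partial>mu)"
    using Fubini'[of "\<lambda>z y. F y z"] by simp
  also have "\<dots> \<le> G * (\<integral>\<^sup>+ z. ennreal (cmod (g z)) * ennreal K \<partial>mu)"
  proof (intro mult_left_mono nn_integral_mono)
    fix z
    have "(\<integral>\<^sup>+ y. F y z \<partial>mu) = ennreal (cmod (g z)) * (\<integral>\<^sup>+ y. ennreal ((cmod (s y z))\<^sup>2 * W y) \<partial>mu)"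
      unfolding F_def using W_nonneg
      by (simp add: nn_integral_cmult[symmetric] mc ennreal_mult[symmetric] mult_ac)
    also have "\<dots> \<le> ennreal (cmod (g z)) * ennreal K"
      by (cases "g z = 0") (simp_all add: mult_left_mono column)
    finally show "(\<integral>\<^sup>+ y. F y z \<partial>mu) \<le> ennreal (cmod (g z)) * ennreal K" .
  qed simp
  also have "\<dots> = G\<^sup>2 * ennreal K"
    unfolding G_def by (subst nn_integral_multc) (simp_all add: mc power2_eq_square mult_ac)
  finally show ?thesis unfolding G_def .
qed


section \<open>The estimate on a far annulus\<close>

definition square_function_const :: "real \<Rightarrow> real \<Rightarrow> real \<Rightarrow> real \<Rightarrow> real \<Rightarrow> real" where
  "square_function_const C\<^sub>\<mu> C\<^sub>s m lam \<alpha> =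
     C\<^sub>s\<^sup>2 * 2 powr (4 * (m + \<alpha>)) * tail_const C\<^sub>\<mu> m (m * lam)
     + C\<^sub>s\<^sup>2 * 2 powr (2 * m * lam) * 2 powr (2 * m) * tail_const C\<^sub>\<mu> m (2 * m + 2 * \<alpha>)"

lemma square_function_const_nonneg:
  "m > 0 \<Longrightarrow> lam > 2 \<Longrightarrow> \<alpha> > 0 \<Longrightarrow> 0 \<le> square_function_const C\<^sub>\<mu> C\<^sub>s m lam \<alpha>"
  unfolding square_function_const_def by (intro add_nonneg_nonneg mult_nonneg_nonneg tail_const_nonneg) auto

lemma column_bound_le_square_function_const:
  fixes k i t d :: real
  assumes m: "m > 0" and lam: "lam > 2" and \<alpha>: "0 < \<alpha>" "\<alpha> \<le> m * (lam - 2) / 2"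
    and \<gamma>: "0 < \<gamma>" "\<gamma> < 1/2" "\<gamma> \<le> \<alpha> / (2 * (m + \<alpha>))" and i: "i \<ge> 1"
    and t: "0 < t" "2 powr (k - 1) < t" "t \<le> 2 powr k" and d: "d = 2 powr (k + (i - 1) * (1 - \<gamma>))"
  shows "C\<^sub>s\<^sup>2 * t powr (2 * \<alpha>) * (d / 2) powr (- (2 * (m + \<alpha>))) * tail_const C\<^sub>\<mu> m (m * lam)
      + (2 * t / d) powr (m * lam) * C\<^sub>s\<^sup>2 * t powr (- 2 * m) * tail_const C\<^sub>\<mu> m (2 * m + 2 * \<alpha>)
    \<le> square_function_const C\<^sub>\<mu> C\<^sub>s m lam \<alpha> * 2 powr (- \<alpha> * i) * 2 powr (- 2 * (k + i) * m)"
proof -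
  let ?T1 = "tail_const C\<^sub>\<mu> m (m * lam)" and ?T2 = "tail_const C\<^sub>\<mu> m (2 * m + 2 * \<alpha>)"
  let ?N = "2 powr (- \<alpha> * i) * 2 powr (- 2 * (k + i) * m)"
  have T: "?T1 \<ge> 0" "?T2 \<ge> 0"
    using m lam \<alpha> by (auto intro: tail_const_nonneg)
  have "C\<^sub>s\<^sup>2 * t powr (2 * \<alpha>) * (d / 2) powr (- (2 * (m + \<alpha>))) * ?T1
      + (2 * t / d) powr (m * lam) * C\<^sub>s\<^sup>2 * t powr (- 2 * m) * ?T2
    = (C\<^sub>s\<^sup>2 * ?T1) * (t powr (2 * \<alpha>) * (d / 2) powr (- (2 * (m + \<alpha>))))
      + (C\<^sub>s\<^sup>2 * ?T2) * ((2 * t / d) powr (m * lam) * t powr (- 2 * m))"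
    by (simp add: algebra_simps)
  also have "\<dots> \<le> (C\<^sub>s\<^sup>2 * ?T1) * (2 powr (4 * (m + \<alpha>)) * ?N)
      + (C\<^sub>s\<^sup>2 * ?T2) * (2 powr (2 * m * lam) * 2 powr (2 * m) * ?N)"
    using kernel_decay_factor_le[OF m \<alpha>(1) \<gamma>(1,3) i t(1,3) d] weight_decay_factor_le[OF m lam \<alpha> \<gamma> i t(2,3) d] T
    by (intro add_mono mult_left_mono) (simp_all add: mult.assoc)
  also have "\<dots> = square_function_const C\<^sub>\<mu> C\<^sub>s m lam \<alpha> * ?N"
    unfolding square_function_const_def by (simp add: algebra_simps)
  finally show ?thesis by (simp add: mult.assoc)
qed

context dyadic_grid
begin

lemma far_annulus_estimate:
  fixes mu :: "(real ^ 'n) measure" and s :: "real ^ 'n \<Rightarrow> real ^ 'n \<Rightarrow> complex"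
    and m lam \<alpha> \<gamma> t C\<^sub>\<mu> C\<^sub>s :: real and k :: int and i :: nat
  assumes mu_borel: "sets mu = sets borel"
    and growth: "\<And>x \<rho>. \<rho> > 0 \<Longrightarrow> emeasure mu (linf_ball x \<rho>) \<le> ennreal (C\<^sub>\<mu> * \<rho> powr m)"
    and m: "m > 0" and lam: "lam > 2" and \<alpha>: "0 < \<alpha>" "\<alpha> \<le> m * (lam - 2) / 2"
    and \<gamma>: "0 < \<gamma>" "\<gamma> < 1/2" "\<gamma> \<le> \<alpha> / (2 * (m + \<alpha>))"
    and s_meas: "(\<lambda>w. s (fst w) (snd w)) \<in> borel_measurable (borel \<Otimes>\<^sub>M borel)"
    and s_size: "\<And>x y. norm (s x y) \<le> C\<^sub>s * t powr \<alpha> / (t + linf_dist x y) powr (m + \<alpha>)"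
    and R: "R \<in> Dk beta k" "good beta r \<gamma> R" "r + 1 \<le> i" "x \<in> R"
    and t: "2 powr (real_of_int k - 1) < t" "t \<le> 2 powr k"
    and g_meas: "g \<in> borel_measurable borel"
    and g_supp: "\<And>z. g z \<noteq> 0 \<Longrightarrow> z \<notin> anc beta (i - 1) R"
  shows "(\<integral>\<^sup>+ y. ennreal ((cmod (LINT z|mu. s y z * g z))\<^sup>2 * ((t / (t + linf_dist x y)) powr (m * lam) / t powr m)) \<partial>mu)
    \<le> (\<integral>\<^sup>+ z. ennreal (cmod (g z)) \<partial>mu)\<^sup>2
      * ennreal (square_function_const C\<^sub>\<mu> C\<^sub>s m lam \<alpha> * 2 powr (- \<alpha> * i) * 2 powr (- 2 * (real_of_int k + i) * m))"
proof -
  have t0: "t > 0" using t(1) powr_gt_zero[of 2 "real_of_int k - 1"] by linarith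
  have i: "real i \<ge> 1" using R(3) by simp
  define d where "d = 2 powr (k + (real i - 1) * (1 - \<gamma>))"
  have far: "d \<le> linf_dist x z" if "g z \<noteq> 0" for z
  proof -
    have "(2 powr k) powr \<gamma> * (2 powr (k + int (i - 1))) powr (1 - \<gamma>) < linf_dist x z"
      using good_far_from_outside_ancestor[OF R(2,1) _ R(4) g_supp[OF that]] R(3) by simp
    moreover have "(2 powr k) powr \<gamma> * (2 powr (k + int (i - 1))) powr (1 - \<gamma>) = d"
      using i unfolding d_def by (simp add: powr_powr powr_add[symmetric] of_nat_diff algebra_simps)
    ultimately show ?thesis by simp
  qed
  define K where "K = C\<^sub>s\<^sup>2 * t powr (2 * \<alpha>) * (d / 2) powr (- (2 * (m + \<alpha>))) * tail_const C\<^sub>\<mu> m (m * lam)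
      + (2 * t / d) powr (m * lam) * C\<^sub>s\<^sup>2 * t powr (- 2 * m) * tail_const C\<^sub>\<mu> m (2 * m + 2 * \<alpha>)"
  have column: "(\<integral>\<^sup>+ y. ennreal ((cmod (s y z))\<^sup>2 * ((t / (t + linf_dist x y)) powr (m * lam) / t powr m)) \<partial>mu)
      \<le> ennreal K" if "g z \<noteq> 0" for z
    unfolding K_def
    using measurable_comp[OF measurable_Pair2'[of z borel borel] s_meas] s_size t0 far[OF that]
    by (intro nn_integral_kernel_weight_le[OF mu_borel growth m lam \<alpha>(1)]) (auto simp: o_def d_def)
  have "K \<le> square_function_const C\<^sub>\<mu> C\<^sub>s m lam \<alpha> * 2 powr (- \<alpha> * i) * 2 powr (- 2 * (real_of_int k + i) * m)"
    unfolding K_def using m lam \<alpha> \<gamma> i t0 t d_def by (rule column_bound_le_square_function_const)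
  moreover have "(\<lambda>y. (t / (t + linf_dist x y)) powr (m * lam) / t powr m) \<in> borel_measurable borel"
    by measurable
  ultimately show ?thesis
    using nn_integral_sq_kernel_integral_le[OF sigma_finite_if_growth[OF mu_borel growth]
        mu_borel s_meas g_meas _ _ column]
    by (auto elim!: order_trans intro!: mult_left_mono ennreal_leI)
qed

lemma square_function_far_annulus_bound:
  fixes mu :: "(real ^ 'n) measure" and s :: "real \<Rightarrow> real ^ 'n \<Rightarrow> real ^ 'n \<Rightarrow> complex"
    and m lam \<alpha> \<gamma> t C\<^sub>\<mu> C\<^sub>s :: real and k :: int and i :: nat
  assumes mu_borel: "sets mu = sets borel"
    and growth: "\<And>x \<rho>. \<rho> > 0 \<Longrightarrow> emeasure mu (linf_ball x \<rho>) \<le> ennreal (C\<^sub>\<mu> * \<rho> powr m)"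
    and m: "m > 0" and lam: "lam > 2" and \<alpha>: "0 < \<alpha>" "\<alpha> \<le> m * (lam - 2) / 2"
    and \<gamma>: "0 < \<gamma>" "\<gamma> < 1/2" "\<gamma> \<le> \<alpha> / (2 * (m + \<alpha>))"
    and s_meas: "\<And>t. t > 0 \<Longrightarrow> (\<lambda>w. s t (fst w) (snd w)) \<in> borel_measurable (borel \<Otimes>\<^sub>M borel)"
    and s_size: "\<And>t x y. t > 0 \<Longrightarrow> norm (s t x y) \<le> C\<^sub>s * t powr \<alpha> / (t + linf_dist x y) powr (m + \<alpha>)"
    and b_meas: "\<And>Q. Q \<in> dyadic beta \<Longrightarrow> b Q \<in> borel_measurable mu" and Qs: "Qs \<in> dyadic beta"
    and R: "R \<in> Dk beta k" "good beta r \<gamma> R" "r + 1 \<le> i" "anc beta i R \<subseteq> Qs" "x \<in> R"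
    and t: "side beta R / 2 < t" "t \<le> side beta R"
  shows "(\<integral>\<^sup>+ y. ennreal ((cmod (theta mu s t
             (\<lambda>z. indicator (anc beta i R - anc beta (i - 1) R) z * tDelta beta mu b A p Qs (anc beta i R) f z) y))\<^sup>2
           * (t / (t + linf_dist x y)) powr (m * lam) / t powr m) \<partial>mu)
      \<le> (ennreal (sqrt (square_function_const C\<^sub>\<mu> C\<^sub>s m lam \<alpha>) * 2 powr (- (\<alpha> / 2) * real i)
            * 2 powr (- real_of_int (k + int i) * m))
          * (\<integral>\<^sup>+ y. ennreal (cmod (tDelta beta mu b A p Qs (anc beta i R) f y)) \<partial>mu))\<^sup>2"
proof -
  define c where "c = square_function_const C\<^sub>\<mu> C\<^sub>s m lam \<alpha>"
  define D where "D = tDelta beta mu b A p Qs (anc beta i R) f"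
  define g where "g = (\<lambda>z. indicator (anc beta i R - anc beta (i - 1) R) z * D z)"
  have c: "c \<ge> 0" unfolding c_def using m lam \<alpha> by (intro square_function_const_nonneg) auto
  have t': "2 powr (real_of_int k - 1) < t" "t \<le> 2 powr k" and t0: "t > 0"
    using t side_Dk[OF R(1)] powr_gt_zero[of 2 k] by (simp_all add: powr_diff)
  have "D \<in> borel_measurable borel"
    unfolding D_def using Qs R(4) anc_Dk[OF R(1)]
    by (intro tDelta_borel_measurable[OF mu_borel] b_meas) (auto intro: Dk_dyadic)
  moreover have "anc beta j R \<in> sets borel" for j
    using Dk_borel[OF anc_Dk[OF R(1)]] .
  ultimately have "g \<in> borel_measurable borel"
    unfolding g_def by measurable
  then have "(\<integral>\<^sup>+ y. ennreal ((cmod (theta mu s t g y))\<^sup>2 * ((t / (t + linf_dist x y)) powr (m * lam) / t powr m)) \<partial>mu)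
      \<le> (\<integral>\<^sup>+ z. ennreal (cmod (g z)) \<partial>mu)\<^sup>2 * ennreal (c * 2 powr (- \<alpha> * i) * 2 powr (- 2 * (real_of_int k + i) * m))"
    unfolding theta_def c_def
    by (intro far_annulus_estimate[OF mu_borel growth m lam \<alpha> \<gamma> s_meas[OF t0] s_size[OF t0] R(1-3,5) t'])
      (auto simp: g_def)
  also have "\<dots> \<le> (\<integral>\<^sup>+ z. ennreal (cmod (D z)) \<partial>mu)\<^sup>2
      * (ennreal (sqrt c * 2 powr (- (\<alpha> / 2) * real i) * 2 powr (- real_of_int (k + int i) * m)))\<^sup>2"
  proof (intro mult_mono power_mono nn_integral_mono)
    show "ennreal (cmod (g z)) \<le> ennreal (cmod (D z))" for z
      unfolding g_def by (auto simp: indicator_def norm_mult)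
    show "ennreal (c * 2 powr (- \<alpha> * i) * 2 powr (- 2 * (real_of_int k + i) * m))
        \<le> (ennreal (sqrt c * 2 powr (- (\<alpha> / 2) * real i) * 2 powr (- real_of_int (k + int i) * m)))\<^sup>2"
      using c by (simp add: ennreal_power power_mult_distrib powr_power algebra_simps)
  qed simp_all
  finally show ?thesis
    unfolding g_def D_def c_def by (simp add: power_mult_distrib mult.commute)
qed

end

theorem lemma4p3:
  fixes mu :: "(real ^ 'n) measure"
    and m lam \<alpha> C\<^sub>\<mu> C\<^sub>s :: real
    and s :: "real \<Rightarrow> real ^ 'n \<Rightarrow> real ^ 'n \<Rightarrow> complex"
    and beta :: "int \<Rightarrow> real ^ 'n"
    and r :: nat and \<gamma> :: real
    and p A :: real
    and b :: "(real ^ 'n) set \<Rightarrow> real ^ 'n \<Rightarrow> complex"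
    and sQ :: int and Qs :: "(real ^ 'n) set"
  assumes m_pos: "m > 0"
    and mu_borel: "sets mu = sets borel"
    and mu_growth: "\<And>x \<rho>. \<rho> > 0 \<Longrightarrow> emeasure mu (linf_ball x \<rho>) \<le> ennreal (C\<^sub>\<mu> * \<rho> powr m)"
    and lam: "lam > 2"
    and alpha: "0 < \<alpha>" "\<alpha> \<le> m * (lam - 2) / 2"
    and s_meas: "\<And>t. t > 0 \<Longrightarrow> (\<lambda>w. s t (fst w) (snd w)) \<in> borel_measurable (borel \<Otimes>\<^sub>M borel)"
    and s_size: "\<And>t x y. t > 0 \<Longrightarrow>
        norm (s t x y) \<le> C\<^sub>s * t powr \<alpha> / (t + linf_dist x y) powr (m + \<alpha>)"
    and s_hoelder: "\<And>t x y y'. t > 0 \<Longrightarrow> linf_dist y y' < t / 2 \<Longrightarrow>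
        norm (s t x y - s t x y') \<le> C\<^sub>s * linf_dist y y' powr \<alpha> / (t + linf_dist x y) powr (m + \<alpha>)"
    and beta01: "\<And>j i. beta j $ i \<in> {0, 1}"
    and r_ge: "r \<ge> 1"
    and gamma: "0 < \<gamma>" "\<gamma> < 1/2" "\<gamma> \<le> \<alpha> / (2 * (m + \<alpha>))"
               "m * \<gamma> / (1 - \<gamma>) \<le> \<alpha> / 4"
    and p: "1 < p" "p \<le> 2"
    and b_meas: "\<And>Q. Q \<in> dyadic beta \<Longrightarrow> b Q \<in> borel_measurable mu"
    and b_supp: "\<And>Q x. Q \<in> dyadic beta \<Longrightarrow> x \<notin> Q \<Longrightarrow> b Q x = 0"
    and b_avg: "\<And>Q. Q \<in> dyadic beta \<Longrightarrow> measure mu Q > 0 \<Longrightarrow> avg mu Q (b Q) = 1"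
    and b_Lp: "\<And>Q. Q \<in> dyadic beta \<Longrightarrow>
        (\<integral>\<^sup>+ x. ennreal (norm (b Q x) powr p) \<partial>mu) \<le> ennreal (A * measure mu Q)"
    and Qs: "Qs \<in> Dk beta sQ"
  shows "\<exists>C. \<forall>k R i x t f.
      R \<in> Dk beta k \<and> good beta r \<gamma> R \<and> i \<ge> r + 1 \<and> anc beta i R \<subseteq> Qs \<and>
      x \<in> R \<and> side beta R / 2 < t \<and> t \<le> side beta R \<and> loc_integrable mu f \<longrightarrow>
      (\<integral>\<^sup>+ y. ennreal ((cmod (theta mu s t
             (\<lambda>z. indicator (anc beta i R - anc beta (i - 1) R) z * tDelta beta mu b A p Qs (anc beta i R) f z) y))\<^sup>2
           * (t / (t + linf_dist x y)) powr (m * lam) / t powr m) \<partial>mu)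
      \<le> (ennreal (C * 2 powr (- (\<alpha> / 2) * real i) * 2 powr (- real_of_int (k + int i) * m))
          * (\<integral>\<^sup>+ y. ennreal (cmod (tDelta beta mu b A p Qs (anc beta i R) f y)) \<partial>mu))\<^sup>2"
proof -
  interpret dyadic_grid beta by unfold_locales (rule beta01)
  show ?thesis
    by (intro exI[of _ "sqrt (square_function_const C\<^sub>\<mu> C\<^sub>s m lam \<alpha>)"] allI impI, elim conjE)
      (rule square_function_far_annulus_bound[OF mu_borel mu_growth m_pos lam alpha gamma(1-3) s_meas s_size
          b_meas Dk_dyadic[OF Qs]])
qed

end
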